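(* For any commutative ring $\mathbf k$ and any $0\le d\le m-1$, the complex $\operatorname{sk}_d\Delta_{[m]}$ is HMF-presented over $\mathbf k$.
   Context: $\Delta_{[m]}$ is the full simplex on $[m]$, $\operatorname{sk}_d$ its $d$-skeleton. For a complex $\mathcal K$ and $I\subseteq[m]$: $\mathcal K_I$ is the full subcomplex, $\partial\Delta_I=\{J\subsetneq I\}$, $\partial^2\Delta_I=\{J\subseteq I:|I\setminus J|\ge2\}$, $\mathrm{MF}(\mathcal K)=\{I:\mathcal K_I=\partial\Delta_I\}$, $\mathrm{AMF}(\mathcal K)=\{L:\partial^2\Delta_L\subseteq\mathcal K_L\subsetneq\partial\Delta_L\}$. With oriented augmented chains $e_I$ and $d(e_I)=\sum_{i\in I}(-1)^{|I_{<i}|}e_{I\setminus i}$, $I_{<i}=\{j\in I:j<i\}$, each $I\in\mathrm{MF}(\mathcal K_J)$ defines $[\partial\Delta_I]\in\widetilde H_{|I|-2}(\mathcal K_J;\mathbf k)$ (class of $d(e_I)$), and each $L\in\mathrm{AMF}(\mathcal K_J)$ defines the formal relation $\rho_L=\sum_{i\in L,L\setminus i\notin\mathcal K}(-1)^{|L_{<i}|}x_{L\setminus i}$. $\mathcal K$ is HMF-presented over $\mathbf k$ if for every $J\subseteq[m]$ the sequence $\bigoplus_{L\in\mathrm{AMF}(\mathcal K_J)}\mathbf k\rho_L\to\bigoplus_{I\in\mathrm{MF}(\mathcal K_J)}\mathbf kx_I\to\widetilde H_*(\mathcal K_J;\mathbf k)\to0$, $x_I\mapsto[\partial\Delta_I]$,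 is exact. *)

theory Defs
  imports Main
begin

text \<open>Simplicial complexes on a finite vertex set of naturals are sets of finite
vertex sets (faces), containing the empty face. Chains of the augmented
oriented chain complex with coefficients in a commutative ring 'k are
functions from vertex sets to 'k supported on faces of a fixed cardinality
q (= dimension + 1).\<close>

definition full_sub :: "nat set set \<Rightarrow> nat set \<Rightarrow> nat set set" where
  "full_sub K J = {\<sigma> \<in> K. \<sigma> \<subseteq> J}"

definition bdry_simplex :: "nat set \<Rightarrow> nat set set" where
  "bdry_simplex I = {S. S \<subset> I}"

definition bdry2_simplex :: "nat set \<Rightarrow> nat set set" where
  "bdry2_simplex I = {S. S \<subseteq> I \<and> card (I - S) \<ge> 2}"

definition MF :: "nat set set \<Rightarrow> nat set \<Rightarrow> nat set set" where
  "MF K V = {I. I \<subseteq> V \<and> full_sub K I = bdry_simplex I}"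

definition AMF :: "nat set set \<Rightarrow> nat set \<Rightarrow> nat set set" where
  "AMF K V = {L. L \<subseteq> V \<and> bdry2_simplex L \<subseteq> full_sub K L \<and> full_sub K L \<subset> bdry_simplex L}"

definition skeleton :: "nat \<Rightarrow> nat \<Rightarrow> nat set set" where
  "skeleton d m = {\<sigma>. \<sigma> \<subseteq> {1..m} \<and> card \<sigma> \<le> d + 1}"

definition sgn_at :: "nat set \<Rightarrow> nat \<Rightarrow> 'k::comm_ring_1" where
  "sgn_at I i = (- 1) ^ card {j \<in> I. j < i}"

definition bd_elem :: "nat set \<Rightarrow> nat set \<Rightarrow> 'k::comm_ring_1" where
  "bd_elem I = (\<lambda>\<tau>. \<Sum>i\<in>I. if \<tau> = I - {i} then sgn_at I i else 0)"

definition chain_on :: "nat set set \<Rightarrow> nat \<Rightarrow> (nat set \<Rightarrow> 'k::zero) \<Rightarrow> bool" where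
  "chain_on K q c \<longleftrightarrow> (\<forall>\<tau>. c \<tau> \<noteq> 0 \<longrightarrow> \<tau> \<in> K \<and> card \<tau> = q)"

definition bd :: "nat set set \<Rightarrow> (nat set \<Rightarrow> 'k::comm_ring_1) \<Rightarrow> nat set \<Rightarrow> 'k" where
  "bd K c = (\<lambda>\<tau>. \<Sum>I\<in>K. c I * bd_elem I \<tau>)"

definition is_cycle :: "nat set set \<Rightarrow> nat \<Rightarrow> (nat set \<Rightarrow> 'k::comm_ring_1) \<Rightarrow> bool" where
  "is_cycle K q z \<longleftrightarrow> chain_on K q z \<and> bd K z = (\<lambda>_. 0)"

definition is_boundary :: "nat set set \<Rightarrow> nat \<Rightarrow> (nat set \<Rightarrow> 'k::comm_ring_1) \<Rightarrow> bool" where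
  "is_boundary K q z \<longleftrightarrow> (\<exists>b. chain_on K (Suc q) b \<and> z = bd K b)"

text \<open>Coefficient of x_I in the formal relation rho_L.\<close>
definition rho_coef :: "nat set set \<Rightarrow> nat set \<Rightarrow> nat set \<Rightarrow> 'k::comm_ring_1" where
  "rho_coef K L I = (\<Sum>i\<in>L. if L - {i} \<notin> K \<and> I = L - {i} then sgn_at L i else 0)"

text \<open>HMF-presentation over 'k, with H_* the (degreewise) reduced homology of the
augmented chain complex; exactness is unfolded: surjectivity onto each
homology group, and kernel = span of the relations.\<close>
definition HMF_presented :: "'k::comm_ring_1 itself \<Rightarrow> nat set \<Rightarrow> nat set set \<Rightarrow> bool" where
  "HMF_presented _ V K \<longleftrightarrow>
    (\<forall>J. J \<subseteq> V \<and> J \<noteq> {} \<longrightarrow>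
      (\<forall>q (z :: nat set \<Rightarrow> 'k). is_cycle (full_sub K J) q z \<longrightarrow>
         (\<exists>c :: nat set \<Rightarrow> 'k. is_boundary (full_sub K J) q
            (\<lambda>\<tau>. z \<tau> - (\<Sum>I\<in>{I \<in> MF (full_sub K J) J. card I = Suc q}. c I * bd_elem I \<tau>))))
      \<and>
      (\<forall>c :: nat set \<Rightarrow> 'k. (\<forall>I. c I \<noteq> 0 \<longrightarrow> I \<in> MF (full_sub K J) J) \<longrightarrow>
         ((\<forall>q. is_boundary (full_sub K J) q
               (\<lambda>\<tau>. \<Sum>I\<in>{I \<in> MF (full_sub K J) J. card I = Suc q}. c I * bd_elem I \<tau>))
          \<longleftrightarrow>
          (\<exists>a :: nat set \<Rightarrow> 'k. c = (\<lambda>I. \<Sum>L\<in>AMF (full_sub K J) J. a L * rho_coef (full_sub K J) L I)))))"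

end

theory Submission
  imports Defs
begin

text \<open>
For J \<subseteq> [m] the full subcomplex of sk_d \<Delta>_[m] on J is sk_d \<Delta>_J. Its minimal non-faces are
the (d+2)-subsets I of J, its almost minimal non-faces are the (d+3)-subsets L, and
\<rho>_L is just d(e_L), since every facet of L is a non-face. The full simplex \<Delta>_J is acyclic:
coning from the least vertex v of J is a contracting homotopy. Hence a cycle z of sk_d \<Delta>_J
is d(cone z); in degrees below d this is a boundary inside the skeleton, and in degree d it
exhibits z as the combination \<Sigma> (cone z)_I d(e_I) of the classes [\<partial>\<Delta>_I]. As for relations,
sk_d \<Delta>_J has no faces of dimension d+1, so \<Sigma> c_I [\<partial>\<Delta>_I] = 0 iff \<Sigma> c_I d(e_I) = 0, i.e. iff c
is a (d+1)-cycle of \<Delta>_J, i.e. iff c = d(a) = \<Sigma> a_L \<rho>_L for a chain a on the (d+3)-subsets.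
\<close>

lemma sgn_at_insert_ge: "i \<le> j \<Longrightarrow> sgn_at (insert j s) i = sgn_at s i"
  unfolding sgn_at_def by (rule arg_cong[where f="\<lambda>n. (-1) ^ card n"]) auto

lemma sgn_at_insert_less:
  assumes "j \<notin> s" and "j < i"
  shows "(sgn_at (insert j s) i :: 'k::comm_ring_1) = - sgn_at s i"
proof -
  have "{x \<in> insert j s. x < i} = insert j {x \<in> s. x < i}" using assms(2) by auto
  moreover have "finite {x \<in> s. x < i}" by (rule finite_subset[of _ "{..<i}"]) auto
  ultimately show ?thesis unfolding sgn_at_def using assms(1) by simp
qed

lemma sgn_at_lower_bound: "(\<And>j. j \<in> s \<Longrightarrow> i \<le> j) \<Longrightarrow> sgn_at s i = 1"
  unfolding sgn_at_def by (metis (no_types, lifting) Collect_empty_eq card.empty leD power_0)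

lemma sgn_at_insert_insert_antisym:
  assumes "i \<notin> \<tau>" "j \<notin> \<tau>" "i \<noteq> j"
  shows "sgn_at (insert i (insert j \<tau>)) i * sgn_at (insert j \<tau>) j
       = - (sgn_at (insert j (insert i \<tau>)) j * sgn_at (insert i \<tau>) i :: 'k::comm_ring_1)"
  using assms by (cases "i < j") (simp_all add: sgn_at_insert_ge sgn_at_insert_less)

lemma sum_off_diagonal_antisym:
  fixes f :: "'a \<Rightarrow> 'a \<Rightarrow> 'b::ab_group_add"
  assumes "finite A" and "\<And>i j. i \<in> A \<Longrightarrow> j \<in> A \<Longrightarrow> i \<noteq> j \<Longrightarrow> f j i = - f i j"
  shows "(\<Sum>i\<in>A. \<Sum>j\<in>A - {i}. f i j) = 0"
  using assms
proof (induction A rule: finite_induct)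
  case (insert x A)
  have split_x: "(\<Sum>j\<in>insert x A - {i}. f i j) = f i x + (\<Sum>j\<in>A - {i}. f i j)" if "i \<in> A" for i
  proof -
    have "insert x A - {i} = insert x (A - {i})" using that insert.hyps(2) by auto
    then show ?thesis using insert.hyps by simp
  qed
  have "(\<Sum>i\<in>insert x A. \<Sum>j\<in>insert x A - {i}. f i j)
      = (\<Sum>j\<in>insert x A - {x}. f x j) + (\<Sum>i\<in>A. \<Sum>j\<in>insert x A - {i}. f i j)"
    by (rule sum.insert[OF insert.hyps])
  also have "\<dots> = (\<Sum>j\<in>A. f x j) + (\<Sum>i\<in>A. f i x + (\<Sum>j\<in>A - {i}. f i j))"
    using insert.hyps(2) split_x by (intro arg_cong2[where f="(+)"] sum.cong) auto
  also have "\<dots> = (\<Sum>j\<in>A. f x j + f j x)"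
  proof -
    have "(\<Sum>i\<in>A. \<Sum>j\<in>A - {i}. f i j) = 0"
      by (rule insert.IH, rule insert.prems) auto
    then show ?thesis by (simp add: sum.distrib)
  qed
  also have "\<dots> = 0"
  proof (rule sum.neutral, intro ballI)
    fix j assume "j \<in> A"
    then have "f j x = - f x j" using insert.hyps(2) by (intro insert.prems) auto
    then show "f x j + f j x = 0" by simp
  qed
  finally show ?case .
qed simp

section \<open>The full simplex is acyclic\<close>

definition simplex_bd :: "nat set \<Rightarrow> (nat set \<Rightarrow> 'k::comm_ring_1) \<Rightarrow> nat set \<Rightarrow> 'k" where
  "simplex_bd J c \<tau> = (\<Sum>i\<in>J - \<tau>. c (insert i \<tau>) * sgn_at (insert i \<tau>) i)"

lemma bd_eq_simplex_bd:
  fixes c :: "nat set \<Rightarrow> 'k::comm_ring_1"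
  assumes J: "finite J" and F: "F \<subseteq> Pow J" and supp: "\<And>\<sigma>. c \<sigma> \<noteq> 0 \<Longrightarrow> \<sigma> \<in> F"
  shows "bd F c = simplex_bd J c"
proof
  fix \<tau>
  from F have "finite F" by (rule finite_subset) (simp add: J)
  have faces: "c I * bd_elem I \<tau>
      = (\<Sum>i\<in>J. if I = insert i \<tau> \<and> i \<notin> \<tau> then c I * sgn_at I i else 0)" if "I \<in> F" for I
  proof -
    have "c I * bd_elem I \<tau> = (\<Sum>i\<in>I. if \<tau> = I - {i} then c I * sgn_at I i else 0)"
      unfolding bd_elem_def sum_distrib_left by (intro sum.cong) auto
    also have "\<dots> = (\<Sum>i\<in>J. if I = insert i \<tau> \<and> i \<notin> \<tau> then c I * sgn_at I i else 0)"
      using that F by (intro sum.mono_neutral_cong_left J) auto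
    finally show ?thesis .
  qed
  have "bd F c \<tau> = (\<Sum>I\<in>F. \<Sum>i\<in>J. if I = insert i \<tau> \<and> i \<notin> \<tau> then c I * sgn_at I i else 0)"
    unfolding bd_def using faces by simp
  also have "\<dots> = (\<Sum>i\<in>J. \<Sum>I\<in>F. if I = insert i \<tau> \<and> i \<notin> \<tau> then c I * sgn_at I i else 0)"
    by (rule sum.swap)
  also have "\<dots> = (\<Sum>i\<in>J. if i \<notin> \<tau> then c (insert i \<tau>) * sgn_at (insert i \<tau>) i else 0)"
  proof (rule sum.cong[OF refl])
    fix i
    have "c (insert i \<tau>) = 0" if "insert i \<tau> \<notin> F" using supp that by blast
    then show "(\<Sum>I\<in>F. if I = insert i \<tau> \<and> i \<notin> \<tau> then c I * sgn_at I i else 0)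
        = (if i \<notin> \<tau> then c (insert i \<tau>) * sgn_at (insert i \<tau>) i else 0)"
      using \<open>finite F\<close> by (cases "i \<in> \<tau>") (auto simp: sum.delta)
  qed
  also have "\<dots> = simplex_bd J c \<tau>"
    unfolding simplex_bd_def sum.inter_filter[OF J, symmetric] by (rule sum.cong) auto
  finally show "bd F c \<tau> = simplex_bd J c \<tau>" .
qed

lemma simplex_bd_simplex_bd:
  fixes a :: "nat set \<Rightarrow> 'k::comm_ring_1"
  assumes "finite J"
  shows "simplex_bd J (simplex_bd J a) = (\<lambda>_. 0)"
proof
  fix \<tau>
  let ?A = "J - \<tau>"
  have cofaces: "J - insert i \<tau> = ?A - {i}" for i by blast
  have "simplex_bd J (simplex_bd J a) \<tau> = (\<Sum>i\<in>?A. \<Sum>j\<in>?A - {i}.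
          a (insert j (insert i \<tau>)) * (sgn_at (insert j (insert i \<tau>)) j * sgn_at (insert i \<tau>) i))"
    unfolding simplex_bd_def sum_distrib_right by (simp add: mult.assoc cofaces)
  also have "\<dots> = 0"
  proof (rule sum_off_diagonal_antisym)
    fix i j assume "i \<in> ?A" "j \<in> ?A" "i \<noteq> j"
    then have "sgn_at (insert i (insert j \<tau>)) i * sgn_at (insert j \<tau>) j
        = - (sgn_at (insert j (insert i \<tau>)) j * sgn_at (insert i \<tau>) i :: 'k)"
      by (intro sgn_at_insert_insert_antisym) auto
    then show "a (insert i (insert j \<tau>)) * (sgn_at (insert i (insert j \<tau>)) i * sgn_at (insert j \<tau>) j)
        = - (a (insert j (insert i \<tau>)) * (sgn_at (insert j (insert i \<tau>)) j * sgn_at (insert i \<tau>) i))"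
      by (simp only: insert_commute[of j i \<tau>] mult_minus_right)
  qed (use assms in simp)
  finally show "simplex_bd J (simplex_bd J a) \<tau> = 0" .
qed

definition cone :: "nat \<Rightarrow> (nat set \<Rightarrow> 'k::zero) \<Rightarrow> nat set \<Rightarrow> 'k" where
  "cone v c \<sigma> = (if v \<in> \<sigma> then c (\<sigma> - {v}) else 0)"

lemma chain_on_cone:
  assumes "finite J" "v \<in> J" "chain_on (Pow J) q c"
  shows "chain_on (Pow J) (Suc q) (cone v c)"
  unfolding chain_on_def
proof (intro allI impI)
  fix \<sigma> assume "cone v c \<sigma> \<noteq> 0"
  then have "v \<in> \<sigma>" "\<sigma> - {v} \<subseteq> J" "card (\<sigma> - {v}) = q"
    using assms(3) unfolding cone_def chain_on_def by (auto split: if_splits)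
  have "finite \<sigma>"
  proof (rule finite_subset)
    show "\<sigma> \<subseteq> insert v J" using \<open>\<sigma> - {v} \<subseteq> J\<close> by blast
  qed (use assms(1) in simp)
  then have "card \<sigma> = Suc (card (\<sigma> - {v}))"
    using \<open>v \<in> \<sigma>\<close> by (rule card_Suc_Diff1[symmetric])
  then show "\<sigma> \<in> Pow J \<and> card \<sigma> = Suc q"
    using \<open>\<sigma> - {v} \<subseteq> J\<close> \<open>card (\<sigma> - {v}) = q\<close> assms(2) by auto
qed

lemma simplex_bd_cone_apex_notin:
  fixes z :: "nat set \<Rightarrow> 'k::comm_ring_1"
  assumes J: "finite J" and v: "v \<in> J" "\<And>j. j \<in> J \<Longrightarrow> v \<le> j" and "\<tau> \<subseteq> J" "v \<notin> \<tau>"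
  shows "simplex_bd J (cone v z) \<tau> = z \<tau>"
proof -
  have "simplex_bd J (cone v z) \<tau>
      = (\<Sum>i\<in>J - \<tau>. if i = v then z \<tau> * sgn_at (insert v \<tau>) v else 0)"
    unfolding simplex_bd_def cone_def using \<open>v \<notin> \<tau>\<close> by (intro sum.cong refl) auto
  also have "\<dots> = z \<tau> * sgn_at (insert v \<tau>) v"
    using J v(1) \<open>v \<notin> \<tau>\<close> by simp
  also have "sgn_at (insert v \<tau>) v = (1 :: 'k)"
    using v(2) \<open>\<tau> \<subseteq> J\<close> by (intro sgn_at_lower_bound) auto
  finally show ?thesis by simp
qed

text \<open>Since v is the least vertex of J, its sign in any face is 1, and adding v to a face
  not containing it flips the sign of every other vertex; this makes the two terms cancel.\<close>

lemma simplex_bd_cone_homotopy: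
  fixes z :: "nat set \<Rightarrow> 'k::comm_ring_1"
  assumes J: "finite J" and v: "v \<in> J" "\<And>j. j \<in> J \<Longrightarrow> v \<le> j" and "\<tau> \<subseteq> J"
  shows "simplex_bd J (cone v z) \<tau> + cone v (simplex_bd J z) \<tau> = z \<tau>"
proof (cases "v \<in> \<tau>")
  case True
  define \<rho> where "\<rho> = \<tau> - {v}"
  have \<tau>: "\<tau> = insert v \<rho>" "v \<notin> \<rho>" using True unfolding \<rho>_def by auto
  have "J - \<rho> = insert v (J - \<tau>)" "v \<notin> J - \<tau>" using v(1) \<tau> by auto
  then have "cone v (simplex_bd J z) \<tau> = z (insert v \<rho>) * sgn_at (insert v \<rho>) v
      + (\<Sum>i\<in>J - \<tau>. z (insert i \<rho>) * sgn_at (insert i \<rho>) i)"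
    unfolding cone_def simplex_bd_def \<rho>_def[symmetric] using True J by simp
  then have "cone v (simplex_bd J z) \<tau> = z \<tau> * sgn_at \<tau> v
      + (\<Sum>i\<in>J - \<tau>. z (insert i \<rho>) * sgn_at (insert i \<rho>) i)"
    unfolding \<tau>(1)[symmetric] .
  moreover have "sgn_at \<tau> v = (1 :: 'k)"
    using v(2) \<open>\<tau> \<subseteq> J\<close> by (intro sgn_at_lower_bound) auto
  moreover have "simplex_bd J (cone v z) \<tau> = (\<Sum>i\<in>J - \<tau>. - (z (insert i \<rho>) * sgn_at (insert i \<rho>) i))"
    unfolding simplex_bd_def
  proof (rule sum.cong[OF refl])
    fix i assume "i \<in> J - \<tau>"
    then have "v < i" "i \<notin> \<rho>" using v \<tau> by (auto simp: le_neq_implies_less)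
    have "cone v z (insert i \<tau>) = z (insert i \<rho>)"
      unfolding cone_def using \<tau> \<open>v < i\<close> by (auto intro!: arg_cong[where f=z])
    moreover have "sgn_at (insert i \<tau>) i = - (sgn_at (insert i \<rho>) i :: 'k)"
      using \<tau> \<open>v < i\<close> by (simp add: sgn_at_insert_ge sgn_at_insert_less)
    ultimately show "cone v z (insert i \<tau>) * sgn_at (insert i \<tau>) i = - (z (insert i \<rho>) * sgn_at (insert i \<rho>) i)"
      by simp
  qed
  ultimately show ?thesis by (simp add: sum_negf)
next
  case False
  then show ?thesis
    using simplex_bd_cone_apex_notin[OF J v \<open>\<tau> \<subseteq> J\<close> False] by (simp add: cone_def)
qed

lemma chain_on_mono: "K \<subseteq> K' \<Longrightarrow> chain_on K q c \<Longrightarrow> chain_on K' q c"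
  unfolding chain_on_def by blast

lemma is_boundary_zero: "is_boundary K q (\<lambda>_. 0 :: 'k::comm_ring_1)"
  unfolding is_boundary_def chain_on_def bd_def by (rule exI[of _ "\<lambda>_. 0"]) simp

lemma simplex_bd_outside:
  assumes "chain_on (Pow J) q b" and "\<not> \<tau> \<subseteq> J"
  shows "simplex_bd J b \<tau> = 0"
proof -
  have "b (insert i \<tau>) = 0" for i
    using assms unfolding chain_on_def by blast
  then show ?thesis unfolding simplex_bd_def by simp
qed

lemma simplex_bd_eq_0_iff:
  fixes c :: "nat set \<Rightarrow> 'k::comm_ring_1"
  assumes J: "finite J" "J \<noteq> {}" and c: "chain_on (Pow J) q c"
  shows "simplex_bd J c = (\<lambda>_. 0) \<longleftrightarrow> (\<exists>b. chain_on (Pow J) (Suc q) b \<and> c = simplex_bd J b)"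
proof
  assume cycle: "simplex_bd J c = (\<lambda>_. 0)"
  define v where "v = Min J"
  have v: "v \<in> J" "\<And>j. j \<in> J \<Longrightarrow> v \<le> j" using J by (simp_all add: v_def)
  have cone_chain: "chain_on (Pow J) (Suc q) (cone v c)"
    using J(1) v(1) c by (rule chain_on_cone)
  have "simplex_bd J (cone v c) \<tau> = c \<tau>" for \<tau>
  proof (cases "\<tau> \<subseteq> J")
    case True
    then show ?thesis
      using simplex_bd_cone_homotopy[OF J(1) v True, of c] cycle by (simp add: cone_def)
  next
    case False
    then have "c \<tau> = 0" using c by (auto simp: chain_on_def)
    with False show ?thesis using simplex_bd_outside[OF cone_chain] by simp
  qed
  then have "c = simplex_bd J (cone v c)" by auto
  with cone_chain show "\<exists>b. chain_on (Pow J) (Suc q) b \<and> c = simplex_bd J b" by blast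
next
  assume "\<exists>b. chain_on (Pow J) (Suc q) b \<and> c = simplex_bd J b"
  then show "simplex_bd J c = (\<lambda>_. 0)"
    using simplex_bd_simplex_bd[OF J(1)] by auto
qed

section \<open>Skeleta of a simplex\<close>

definition simplex_skeleton :: "nat \<Rightarrow> nat set \<Rightarrow> nat set set" where
  "simplex_skeleton d J = {\<sigma>. \<sigma> \<subseteq> J \<and> card \<sigma> \<le> d + 1}"

lemma skeleton_eq_simplex_skeleton: "skeleton d m = simplex_skeleton d {1..m}"
  unfolding skeleton_def simplex_skeleton_def ..

lemma full_sub_simplex_skeleton: "full_sub (simplex_skeleton d J) I = simplex_skeleton d (J \<inter> I)"
  unfolding full_sub_def simplex_skeleton_def by auto

lemma simplex_skeleton_subset_Pow: "simplex_skeleton d J \<subseteq> Pow J"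
  unfolding simplex_skeleton_def by auto

lemma simplex_skeleton_subset_bdry_simplex_iff:
  "simplex_skeleton d L \<subseteq> bdry_simplex L \<longleftrightarrow> d + 1 < card L"
  unfolding simplex_skeleton_def bdry_simplex_def by auto

lemma bdry_simplex_subset_simplex_skeleton_iff:
  assumes "finite L"
  shows "bdry_simplex L \<subseteq> simplex_skeleton d L \<longleftrightarrow> card L \<le> d + 2"
proof
  assume sub: "bdry_simplex L \<subseteq> simplex_skeleton d L"
  show "card L \<le> d + 2"
  proof (rule ccontr)
    assume "\<not> card L \<le> d + 2"
    then have "d + 2 \<le> card L" by simp
    then obtain T where "T \<subseteq> L" "card T = d + 2" by (rule obtain_subset_with_card_n)
    then have "T \<in> bdry_simplex L" "T \<notin> simplex_skeleton d L"
      using \<open>\<not> card L \<le> d + 2\<close> by (auto simp: bdry_simplex_def simplex_skeleton_def)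
    with sub show False by blast
  qed
next
  assume "card L \<le> d + 2"
  show "bdry_simplex L \<subseteq> simplex_skeleton d L"
  proof
    fix S assume "S \<in> bdry_simplex L"
    then have "S \<subset> L" by (simp add: bdry_simplex_def)
    with psubset_card_mono[OF assms this] \<open>card L \<le> d + 2\<close>
    show "S \<in> simplex_skeleton d L" by (simp add: simplex_skeleton_def)
  qed
qed

lemma bdry2_simplex_subset_simplex_skeleton_iff:
  assumes "finite L"
  shows "bdry2_simplex L \<subseteq> simplex_skeleton d L \<longleftrightarrow> card L \<le> d + 3"
proof
  assume sub: "bdry2_simplex L \<subseteq> simplex_skeleton d L"
  show "card L \<le> d + 3"
  proof (rule ccontr)
    assume "\<not> card L \<le> d + 3"
    then have "d + 2 \<le> card L" by simp
    then obtain T where "T \<subseteq> L" "card T = d + 2" by (rule obtain_subset_with_card_n)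
    then have "T \<in> bdry2_simplex L" "T \<notin> simplex_skeleton d L"
      using card_Diff_subset[OF finite_subset[OF \<open>T \<subseteq> L\<close> assms] \<open>T \<subseteq> L\<close>] \<open>\<not> card L \<le> d + 3\<close>
      by (auto simp: bdry2_simplex_def simplex_skeleton_def)
    with sub show False by blast
  qed
next
  assume "card L \<le> d + 3"
  show "bdry2_simplex L \<subseteq> simplex_skeleton d L"
  proof
    fix S assume "S \<in> bdry2_simplex L"
    then have "S \<subseteq> L" "2 \<le> card (L - S)" by (auto simp: bdry2_simplex_def)
    then show "S \<in> simplex_skeleton d L"
      using card_Diff_subset[OF finite_subset[OF \<open>S \<subseteq> L\<close> assms] \<open>S \<subseteq> L\<close>] \<open>card L \<le> d + 3\<close>
      by (auto simp: simplex_skeleton_def)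
  qed
qed

lemma MF_simplex_skeleton:
  assumes "finite J"
  shows "MF (simplex_skeleton d J) J = {I. I \<subseteq> J \<and> card I = d + 2}"
proof -
  have "simplex_skeleton d I = bdry_simplex I \<longleftrightarrow> card I = d + 2" if "I \<subseteq> J" for I
    using finite_subset[OF that assms] simplex_skeleton_subset_bdry_simplex_iff[of d I]
      bdry_simplex_subset_simplex_skeleton_iff[of I d] by auto
  moreover have "J \<inter> I = I" if "I \<subseteq> J" for I using that by blast
  ultimately show ?thesis
    unfolding MF_def full_sub_simplex_skeleton by (intro Collect_cong) metis
qed

lemma AMF_simplex_skeleton:
  assumes "finite J"
  shows "AMF (simplex_skeleton d J) J = {L. L \<subseteq> J \<and> card L = d + 3}"
proof -
  have "bdry2_simplex L \<subseteq> simplex_skeleton d L \<and> simplex_skeleton d L \<subset> bdry_simplex L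
      \<longleftrightarrow> card L = d + 3" if "L \<subseteq> J" for L
    using finite_subset[OF that assms] simplex_skeleton_subset_bdry_simplex_iff[of d L]
      bdry_simplex_subset_simplex_skeleton_iff[of L d] bdry2_simplex_subset_simplex_skeleton_iff[of L d]
    by (auto simp: psubset_eq)
  moreover have "J \<inter> L = L" if "L \<subseteq> J" for L using that by blast
  ultimately show ?thesis
    unfolding AMF_def full_sub_simplex_skeleton by (intro Collect_cong) metis
qed

lemma rho_coef_eq_bd_elem: "(\<And>i. i \<in> L \<Longrightarrow> L - {i} \<notin> K) \<Longrightarrow> rho_coef K L = bd_elem L"
  unfolding rho_coef_def bd_elem_def by (intro ext sum.cong) auto

lemma chain_on_simplex_skeleton_iff:
  "q \<le> d + 1 \<Longrightarrow> chain_on (simplex_skeleton d J) q c \<longleftrightarrow> chain_on (Pow J) q c"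
  unfolding chain_on_def simplex_skeleton_def by auto

lemma chain_on_simplex_skeleton_above:
  "d + 1 < q \<Longrightarrow> chain_on (simplex_skeleton d J) q c \<longleftrightarrow> c = (\<lambda>_. 0)"
  unfolding chain_on_def simplex_skeleton_def by (fastforce simp: fun_eq_iff)

lemma is_boundary_simplex_skeleton_iff_zero:
  fixes z :: "nat set \<Rightarrow> 'k::comm_ring_1"
  assumes "d < q"
  shows "is_boundary (simplex_skeleton d J) q z \<longleftrightarrow> z = (\<lambda>_. 0)"
  using assms chain_on_simplex_skeleton_above[of d "Suc q" J] is_boundary_zero
  by (auto simp: is_boundary_def bd_def)

lemma is_boundary_simplex_skeleton_iff:
  fixes z :: "nat set \<Rightarrow> 'k::comm_ring_1"
  assumes "finite J" and "q \<le> d"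
  shows "is_boundary (simplex_skeleton d J) q z
    \<longleftrightarrow> (\<exists>b. chain_on (Pow J) (Suc q) b \<and> z = simplex_bd J b)"
proof -
  have "bd (simplex_skeleton d J) b = simplex_bd J b" if "chain_on (Pow J) (Suc q) b" for b :: "nat set \<Rightarrow> 'k"
    using that assms by (intro bd_eq_simplex_bd simplex_skeleton_subset_Pow)
      (auto simp: chain_on_def simplex_skeleton_def)
  then show ?thesis
    using assms(2) chain_on_simplex_skeleton_iff[of "Suc q" d J] by (auto simp: is_boundary_def)
qed

lemma simplex_skeleton_MF_sum:
  fixes c :: "nat set \<Rightarrow> 'k::comm_ring_1"
  assumes J: "finite J" and c: "chain_on (Pow J) (d + 2) c"
  shows "(\<lambda>\<tau>. \<Sum>I\<in>{I \<in> MF (simplex_skeleton d J) J. card I = Suc q}. c I * bd_elem I \<tau>)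
      = (if q = d + 1 then simplex_bd J c else (\<lambda>_. 0))"
proof (cases "q = d + 1")
  case True
  then have "bd {I \<in> MF (simplex_skeleton d J) J. card I = Suc q} c = simplex_bd J c"
    using c MF_simplex_skeleton[OF J] by (intro bd_eq_simplex_bd J) (auto simp: chain_on_def)
  with True show ?thesis by (simp add: bd_def)
next
  case False
  then have "{I \<in> MF (simplex_skeleton d J) J. card I = Suc q} = {}"
    using MF_simplex_skeleton[OF J] by auto
  then show ?thesis using False by (simp only: sum.empty if_False)
qed

lemma simplex_skeleton_AMF_sum:
  fixes a :: "nat set \<Rightarrow> 'k::comm_ring_1" and d :: nat
  assumes J: "finite J"
  defines "K \<equiv> simplex_skeleton d J"
  shows "(\<lambda>I. \<Sum>L\<in>AMF K J. a L * rho_coef K L I) = simplex_bd J (\<lambda>L. if L \<in> AMF K J then a L else 0)"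
proof -
  have "rho_coef K L I = (bd_elem L I :: 'k)" if "L \<in> AMF K J" for L I
  proof -
    have "finite L" "card L = d + 3"
      using that AMF_simplex_skeleton[OF J] J finite_subset unfolding K_def by auto
    then have "rho_coef K L = (bd_elem L :: nat set \<Rightarrow> 'k)"
      unfolding K_def by (intro rho_coef_eq_bd_elem) (simp add: simplex_skeleton_def)
    then show ?thesis by simp
  qed
  then have "(\<lambda>I. \<Sum>L\<in>AMF K J. a L * rho_coef K L I) = bd (AMF K J) (\<lambda>L. if L \<in> AMF K J then a L else 0)"
    unfolding bd_def by (intro ext sum.cong) auto
  also have "\<dots> = simplex_bd J (\<lambda>L. if L \<in> AMF K J then a L else 0)"
    using AMF_simplex_skeleton[OF J] unfolding K_def
    by (intro bd_eq_simplex_bd J) (auto split: if_splits)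
  finally show ?thesis .
qed

lemma simplex_skeleton_MF_classes_generate:
  fixes z :: "nat set \<Rightarrow> 'k::comm_ring_1"
  assumes J: "finite J" "J \<noteq> {}" and cycle: "is_cycle (simplex_skeleton d J) q z"
  shows "\<exists>c. is_boundary (simplex_skeleton d J) q
    (\<lambda>\<tau>. z \<tau> - (\<Sum>I\<in>{I \<in> MF (simplex_skeleton d J) J. card I = Suc q}. c I * bd_elem I \<tau>))"
proof -
  let ?K = "simplex_skeleton d J"
  have z_chain: "chain_on (Pow J) q z"
    using cycle chain_on_mono[OF simplex_skeleton_subset_Pow] unfolding is_cycle_def by blast
  have "simplex_bd J z = bd ?K z"
    using cycle by (intro bd_eq_simplex_bd[symmetric] J(1) simplex_skeleton_subset_Pow)
      (auto simp: is_cycle_def chain_on_def)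
  then have "simplex_bd J z = (\<lambda>_. 0)"
    using cycle by (simp add: is_cycle_def)
  then obtain b where b: "chain_on (Pow J) (Suc q) b" "z = simplex_bd J b"
    using simplex_bd_eq_0_iff[OF J z_chain] by blast
  consider "q \<le> d" | "q = d + 1" | "d + 1 < q" by linarith
  then show ?thesis
  proof cases
    case 1
    then have "is_boundary ?K q z"
      using b is_boundary_simplex_skeleton_iff[OF J(1)] by blast
    then show ?thesis by (intro exI[of _ "\<lambda>_. 0"]) simp
  next
    case 2
    then have "(\<lambda>\<tau>. \<Sum>I\<in>{I \<in> MF ?K J. card I = Suc q}. b I * bd_elem I \<tau>) = z"
      using simplex_skeleton_MF_sum[OF J(1), of d b q] b by simp
    then have "(\<lambda>\<tau>. z \<tau> - (\<Sum>I\<in>{I \<in> MF ?K J. card I = Suc q}. b I * bd_elem I \<tau>)) = (\<lambda>_. 0)"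
      unfolding fun_eq_iff by simp
    then show ?thesis
      by (intro exI[of _ b]) (simp only: is_boundary_zero)
  next
    case 3
    then have "z = (\<lambda>_. 0)"
      using cycle chain_on_simplex_skeleton_above by (auto simp: is_cycle_def)
    then show ?thesis
      using is_boundary_zero by (intro exI[of _ "\<lambda>_. 0"]) simp
  qed
qed

lemma simplex_skeleton_MF_relations:
  fixes c :: "nat set \<Rightarrow> 'k::comm_ring_1"
  assumes J: "finite J" "J \<noteq> {}"
    and supp: "\<forall>I. c I \<noteq> 0 \<longrightarrow> I \<in> MF (simplex_skeleton d J) J"
  shows "(\<forall>q. is_boundary (simplex_skeleton d J) q
            (\<lambda>\<tau>. \<Sum>I\<in>{I \<in> MF (simplex_skeleton d J) J. card I = Suc q}. c I * bd_elem I \<tau>))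
    \<longleftrightarrow> (\<exists>a. c = (\<lambda>I. \<Sum>L\<in>AMF (simplex_skeleton d J) J. a L * rho_coef (simplex_skeleton d J) L I))"
proof -
  let ?K = "simplex_skeleton d J"
  have c_chain: "chain_on (Pow J) (d + 2) c"
    using supp MF_simplex_skeleton[OF J(1)] by (auto simp: chain_on_def)
  have "(\<forall>q. is_boundary ?K q (\<lambda>\<tau>. \<Sum>I\<in>{I \<in> MF ?K J. card I = Suc q}. c I * bd_elem I \<tau>))
      \<longleftrightarrow> simplex_bd J c = (\<lambda>_. 0)"
    unfolding simplex_skeleton_MF_sum[OF J(1) c_chain]
    using is_boundary_simplex_skeleton_iff_zero[of d "d + 1" J "simplex_bd J c"]
    by (auto simp: is_boundary_zero)
  also have "\<dots> \<longleftrightarrow> (\<exists>b. chain_on (Pow J) (Suc (d + 2)) b \<and> c = simplex_bd J b)"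
    by (rule simplex_bd_eq_0_iff[OF J c_chain])
  also have "\<dots> \<longleftrightarrow> (\<exists>a. c = (\<lambda>I. \<Sum>L\<in>AMF ?K J. a L * rho_coef ?K L I))"
  proof -
    have "chain_on (Pow J) (Suc (d + 2)) b \<longleftrightarrow> b = (\<lambda>L. if L \<in> AMF ?K J then b L else 0)"
      for b :: "nat set \<Rightarrow> 'k"
      using AMF_simplex_skeleton[OF J(1)] by (auto simp: chain_on_def fun_eq_iff eval_nat_numeral)
    moreover have "chain_on (Pow J) (Suc (d + 2)) (\<lambda>L. if L \<in> AMF ?K J then a L else 0)"
      for a :: "nat set \<Rightarrow> 'k"
      using AMF_simplex_skeleton[OF J(1)] by (auto simp: chain_on_def eval_nat_numeral)
    ultimately show ?thesis
      unfolding simplex_skeleton_AMF_sum[OF J(1)] by metis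
  qed
  finally show ?thesis .
qed

theorem mainTheorem12:
  fixes m d :: nat
  assumes "d + 1 \<le> m"
  shows "HMF_presented TYPE('k::comm_ring_1) {1..m} (skeleton d m)"
proof -
  have "full_sub (skeleton d m) J = simplex_skeleton d J" "finite J" if "J \<subseteq> {1..m}" for J
    using that finite_subset
    by (auto simp: skeleton_eq_simplex_skeleton full_sub_simplex_skeleton Int_absorb1)
  then show ?thesis
    unfolding HMF_presented_def
    by (simp add: simplex_skeleton_MF_classes_generate simplex_skeleton_MF_relations)
qed

end
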